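(* Let $r\in(0,1)$ and $k\geq1$ an integer. Let $W$ be a positive random variable (cascade multiplier) with $\log W=a+bN$, $N\sim\mathrm{Poisson}(\lambda)$, where $a\in\mathbb{R}$, $b<0$, $\lambda>0$. Define the scaling exponents $\zeta_p$ by $\mathbb{E}[W^p]=r^{\zeta_p}$ and $\delta_p=\zeta_{p+k}-\zeta_p$. Then, with $\beta=e^{bk}\in(0,1)$, the limit $\delta_\infty=\lim_{p\to\infty}\delta_p$ exists and is finite and $$\delta_{p+k}=(1-\beta)\delta_\infty+\beta\delta_p\qquad\text{for all }p\in k\mathbb{N}_0=\{0,k,2k,\dots\},$$ i.e.\ the hierarchical symmetry axiom A1 holds. *)

theory Defs
  imports "HOL-Probability.Probability"
begin

definition scaling_exponent :: "'a measure \<Rightarrow> ('a \<Rightarrow> real) \<Rightarrow> real \<Rightarrow> real \<Rightarrow> real" where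
  "scaling_exponent M W r p = ln (integral\<^sup>L M (\<lambda>\<omega>. W \<omega> powr p)) / ln r"

definition scaling_delta :: "'a measure \<Rightarrow> ('a \<Rightarrow> real) \<Rightarrow> real \<Rightarrow> real \<Rightarrow> real \<Rightarrow> real" where
  "scaling_delta M W r k p = scaling_exponent M W r (p + k) - scaling_exponent M W r p"

end

theory Submission imports Defs begin

text \<open>The moments of the log-Poisson multiplier are explicit: by the Poisson moment
  generating function, \<open>E[W powr p] = exp (p a + \<lambda> (exp (p b) - 1))\<close>. Hence
  \<open>\<delta> p = A + B exp (b p)\<close> for constants \<open>A, B\<close>, and any function of this shape with
  \<open>b < 0\<close> tends to \<open>A\<close> and satisfies \<open>\<delta> (p + k) = (1 - exp (b k)) A + exp (b k) \<delta> p\<close>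
  for every real \<open>p\<close>, not only for \<open>p\<close> in \<open>k\<nat>\<close>.\<close>

lemma poisson_pmf_expectation_exp:
  assumes "0 < l"
  shows "measure_pmf.expectation (poisson_pmf l) (\<lambda>n. exp (t * real n)) = exp (l * (exp t - 1))"
proof -
  define g where "g n = exp (-l) * ((l * exp t) ^ n / fact n)" for n :: nat
  have g_eq: "(\<lambda>n. pmf (poisson_pmf l) n * exp (t * real n)) = g"
    using assms by (auto simp: g_def fun_eq_iff exp_of_nat_mult[symmetric] power_mult_distrib)
  have g_sums: "g sums (exp (-l) * exp (l * exp t))"
    unfolding g_def using exp_converges[of "l * exp t"]
    by (intro sums_mult) (simp add: divide_inverse mult.commute)
  have "norm (g n) = g n" for n
    using assms by (simp add: g_def)
  then have "integrable (count_space UNIV) g"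
    unfolding integrable_count_space_nat_iff using g_sums sums_summable by auto
  then have "integral\<^sup>L (count_space UNIV) g = exp (-l) * exp (l * exp t)"
    using g_sums by (simp add: integral_count_space_nat sums_unique[symmetric])
  then show ?thesis
    by (simp add: measure_pmf_eq_density integral_density g_eq exp_add[symmetric] algebra_simps)
qed

lemma log_poisson_moment:
  assumes "0 < l"
    and "N \<in> measurable M (count_space UNIV)"
    and "distr M (count_space UNIV) N = measure_pmf (poisson_pmf l)"
    and "\<And>\<omega>. W \<omega> = exp (a + b * real (N \<omega>))"
  shows "integral\<^sup>L M (\<lambda>\<omega>. W \<omega> powr p) = exp (p * a + l * (exp (p * b) - 1))"
proof -
  have "integral\<^sup>L M (\<lambda>\<omega>. W \<omega> powr p) = integral\<^sup>L M (\<lambda>\<omega>. exp (p * a) * exp (p * b * real (N \<omega>)))"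
    by (simp add: assms(4) powr_def exp_add[symmetric] algebra_simps)
  also have "\<dots> = exp (p * a) * measure_pmf.expectation (poisson_pmf l) (\<lambda>n. exp (p * b * real n))"
    using integral_distr[OF assms(2), of "\<lambda>n. exp (p * b * real n)"] assms(3) by simp
  also have "\<dots> = exp (p * a + l * (exp (p * b) - 1))"
    by (simp add: poisson_pmf_expectation_exp[OF assms(1)] exp_add)
  finally show ?thesis .
qed

lemma scaling_delta_log_poisson:
  assumes "0 < l"
    and "N \<in> measurable M (count_space UNIV)"
    and "distr M (count_space UNIV) N = measure_pmf (poisson_pmf l)"
    and "\<And>\<omega>. W \<omega> = exp (a + b * real (N \<omega>))"
  shows "scaling_delta M W r h p = h * a / ln r + l * (exp (b * h) - 1) / ln r * exp (b * p)"
  unfolding scaling_delta_def scaling_exponent_def log_poisson_moment[OF assms]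
  by (simp add: diff_divide_distrib[symmetric] add_divide_distrib[symmetric]
      algebra_simps exp_add[symmetric])

lemma tendsto_add_exp_decay:
  fixes b :: real
  assumes "b < 0"
  shows "((\<lambda>p. A + B * exp (b * p)) \<longlongrightarrow> A) at_top"
proof -
  have "filterlim (\<lambda>p::real. b * p) at_bot at_top"
    by (rule filterlim_tendsto_neg_mult_at_bot[OF tendsto_const assms filterlim_ident])
  then have "((\<lambda>p. exp (b * p)) \<longlongrightarrow> 0) at_top"
    using exp_at_bot filterlim_compose by blast
  then show ?thesis
    using tendsto_add[OF tendsto_const tendsto_mult[OF tendsto_const]] by fastforce
qed

lemma add_exp_shift:
  fixes b :: real
  shows "A + B * exp (b * (p + h)) = (1 - exp (b * h)) * A + exp (b * h) * (A + B * exp (b * p))"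
  by (simp add: distrib_left exp_add algebra_simps)

theorem mainTheorem6:
  fixes M :: "'a measure" and N :: "'a \<Rightarrow> nat" and W :: "'a \<Rightarrow> real"
    and r a b l :: real and k :: nat
  assumes "prob_space M"
    and "0 < r" "r < 1" "k \<ge> 1"
    and "b < 0" "0 < l"
    and "N \<in> measurable M (count_space UNIV)"
    and "distr M (count_space UNIV) N = measure_pmf (poisson_pmf l)"
    and "\<And>\<omega>. W \<omega> = exp (a + b * real (N \<omega>))"
  shows "0 < exp (b * real k) \<and> exp (b * real k) < 1 \<and>
    (\<exists>\<delta>inf::real. ((\<lambda>p. scaling_delta M W r (real k) p) \<longlongrightarrow> \<delta>inf) at_top \<and>
       (\<forall>n::nat. scaling_delta M W r (real k) (real (n * k) + real k)
          = (1 - exp (b * real k)) * \<delta>inf + exp (b * real k) * scaling_delta M W r (real k) (real (n * k))))"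
proof -
  define A where "A = real k * a / ln r"
  define B where "B = l * (exp (b * real k) - 1) / ln r"
  have delta: "scaling_delta M W r (real k) p = A + B * exp (b * p)" for p
    unfolding A_def B_def using scaling_delta_log_poisson[OF assms(6-9)] .
  have "exp (b * real k) < 1"
    using assms(4,5) by (simp add: mult_neg_pos)
  moreover have "((\<lambda>p. scaling_delta M W r (real k) p) \<longlongrightarrow> A) at_top"
    unfolding delta using tendsto_add_exp_decay[OF assms(5)] .
  ultimately show ?thesis
    unfolding delta using add_exp_shift by auto
qed

end
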